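(* Let $E$ be a symmetric operator defined on a dense domain $\mathcal D$ of a Hilbert space $\mathcal H$. Let $\mathbf d=\{d_i\}_{i\in\mathbb N}$ and $\boldsymbol\lambda=\{\lambda_i\}_{i\in\mathbb N}$ be two nondecreasing real sequences such that \[ \delta_k:=\sum_{i=1}^k(d_i-\lambda_i)\ge0\qquad\text{for all }k\in\mathbb N, \] and suppose $\delta_k=0$ for infinitely many $k\in\mathbb N$. Let $\{f_i\}_{i\in\mathbb N}\subset\mathcal D$ be an orthonormal sequence with $\langle Ef_i,f_i\rangle=\lambda_i$ for all $i$. Then there exists an orthonormal sequence $\{e_i\}_{i\in\mathbb N}$, each element of which lies in the (algebraic) linear span of $\{f_i\}_{i\in\mathbb N}$, such that $\overline{\operatorname{span}}\{e_i\}=\overline{\operatorname{span}}\{f_i\}$ and $\langle Ee_i,e_i\rangle=d_i$ for all $i\in\mathbb N$.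
   Context: $E$ symmetric means $\langle Ef,g\rangle=\langle f,Eg\rangle$ for all $f,g\in\mathcal D$. $\overline{\operatorname{span}}$ is the closed linear span. *)

theory Defs
  imports "HOL-Analysis.Analysis"
begin

class complex_hilbert = real_normed_vector + complete_space +
  fixes scaleC :: "complex \<Rightarrow> 'a \<Rightarrow> 'a"
    and cinner :: "'a \<Rightarrow> 'a \<Rightarrow> complex"
  assumes scaleC_add_right: "scaleC a (x + y) = scaleC a x + scaleC a y"
    and scaleC_add_left: "scaleC (a + b) x = scaleC a x + scaleC b x"
    and scaleC_scaleC: "scaleC a (scaleC b x) = scaleC (a * b) x"
    and scaleC_one: "scaleC 1 x = x"
    and scaleC_of_real: "scaleC (complex_of_real r) x = scaleR r x"
    and cinner_conj_commute: "cinner y x = cnj (cinner x y)"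
    and cinner_add_left: "cinner (x + y) z = cinner x z + cinner y z"
    and cinner_scaleC_left: "cinner (scaleC a x) y = a * cinner x y"
    and cinner_self_nonneg: "0 \<le> Re (cinner x x)"
    and cinner_self_eq_zero: "cinner x x = 0 \<longleftrightarrow> x = 0"
    and norm_eq_sqrt_cinner: "norm x = sqrt (Re (cinner x x))"

definition cspan :: "'a::complex_hilbert set \<Rightarrow> 'a set" where
  "cspan S = {x. \<exists>T c. finite T \<and> T \<subseteq> S \<and> x = (\<Sum>v\<in>T. scaleC (c v) v)}"

definition csubspace :: "'a::complex_hilbert set \<Rightarrow> bool" where
  "csubspace D \<longleftrightarrow> 0 \<in> D \<and> (\<forall>x\<in>D. \<forall>y\<in>D. x + y \<in> D) \<and> (\<forall>c. \<forall>x\<in>D. scaleC c x \<in> D)"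

definition operator_on :: "'a::complex_hilbert set \<Rightarrow> ('a \<Rightarrow> 'a) \<Rightarrow> bool" where
  "operator_on D E \<longleftrightarrow> csubspace D \<and>
     (\<forall>x\<in>D. \<forall>y\<in>D. E (x + y) = E x + E y) \<and> (\<forall>c. \<forall>x\<in>D. E (scaleC c x) = scaleC c (E x))"

definition symmetric_on :: "'a::complex_hilbert set \<Rightarrow> ('a \<Rightarrow> 'a) \<Rightarrow> bool" where
  "symmetric_on D E \<longleftrightarrow> (\<forall>f\<in>D. \<forall>g\<in>D. cinner (E f) g = cinner f (E g))"

definition orthonormal_seq :: "(nat \<Rightarrow> 'a::complex_hilbert) \<Rightarrow> bool" where
  "orthonormal_seq e \<longleftrightarrow> (\<forall>i j. cinner (e i) (e j) = (if i = j then 1 else 0))"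

end

theory Submission
  imports Defs
begin

text \<open>Cut the index set at the zeros of \<open>\<delta>\<close> into finite blocks. On each block \<open>d\<close> is
  majorized by \<open>\<lambda>\<close>, and the finite problem on a block \<open>{m..<n}\<close> is solved by induction on
  its length: pick \<open>j\<close> with \<open>\<lambda>\<^sub>j \<le> d\<^sub>m \<le> \<lambda>\<^sub>j\<^sub>+\<^sub>1\<close>; a rotation in the plane of \<open>f\<^sub>j, f\<^sub>j\<^sub>+\<^sub>1\<close>, with a phase
  that kills the cross term \<open>\<langle>E f\<^sub>j\<^sub>+\<^sub>1, f\<^sub>j\<rangle>\<close>, gives a unit vector with diagonal value
  \<open>d\<^sub>m\<close> and an orthogonal partner with value \<open>\<lambda>\<^sub>j + \<lambda>\<^sub>j\<^sub>+\<^sub>1 - d\<^sub>m\<close>. Replacing the pair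
  \<open>\<lambda>\<^sub>j, \<lambda>\<^sub>j\<^sub>+\<^sub>1\<close> by that value keeps the data on \<open>{m+1..<n}\<close> sorted and majorized. Solutions on
  different blocks are orthogonal, and together they span the same space as the \<open>f\<^sub>i\<close>.\<close>

context complex_hilbert
begin

lemma scaleC_zero_right [simp]: "scaleC a 0 = 0"
  using scaleC_add_right[of a 0 0] by simp

lemma scaleC_zero_left [simp]: "scaleC 0 x = 0"
  using scaleC_add_left[of 0 0 x] by simp

lemma scaleC_sum_right: "scaleC a (sum g A) = (\<Sum>i\<in>A. scaleC a (g i))"
  by (induction A rule: infinite_finite_induct) (auto simp: scaleC_add_right)

lemma cinner_zero_left [simp]: "cinner 0 y = 0"
  using cinner_add_left[of 0 0 y] by simp

lemma cinner_add_right: "cinner x (y + z) = cinner x y + cinner x z"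
  by (metis cinner_add_left cinner_conj_commute complex_cnj_add)

lemma cinner_scaleC_right: "cinner x (scaleC a y) = cnj a * cinner x y"
  by (metis cinner_scaleC_left cinner_conj_commute complex_cnj_mult)

lemma cinner_eq_zero_commute: "cinner x y = 0 \<longleftrightarrow> cinner y x = 0"
  by (metis cinner_conj_commute complex_cnj_zero_iff)

lemma cinner_combination:
  "cinner (scaleC a1 x1 + scaleC b1 y1) (scaleC a2 x2 + scaleC b2 y2) =
   a1 * cnj a2 * cinner x1 x2 + a1 * cnj b2 * cinner x1 y2
     + b1 * cnj a2 * cinner y1 x2 + b1 * cnj b2 * cinner y1 y2"
  by (simp add: cinner_add_left cinner_add_right cinner_scaleC_left cinner_scaleC_right
      algebra_simps)

lemma scaleC_combination:
  "scaleC c1 (scaleC a1 x + scaleC b1 y) + scaleC c2 (scaleC a2 x + scaleC b2 y) =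
   scaleC (c1 * a1 + c2 * a2) x + scaleC (c1 * b1 + c2 * b2) y"
  by (simp add: scaleC_add_right scaleC_scaleC scaleC_add_left algebra_simps)

end

section \<open>Complex linear spans\<close>

lemma cspan_induct [consumes 1]:
  assumes "x \<in> cspan S" "P 0" "\<And>x y. P x \<Longrightarrow> P y \<Longrightarrow> P (x + y)"
    "\<And>c x. P x \<Longrightarrow> P (scaleC c x)" "\<And>x. x \<in> S \<Longrightarrow> P x"
  shows "P x"
proof -
  obtain T c where T: "finite T" "T \<subseteq> S" "x = (\<Sum>v\<in>T. scaleC (c v) v)"
    using assms(1) unfolding cspan_def by blast
  have "P (\<Sum>v\<in>T. scaleC (c v) v)"
    using T(1,2) by (induction T rule: finite_induct) (auto intro: assms)
  with T show ?thesis by simp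
qed

lemma cspan_zero [simp]: "0 \<in> cspan S"
  unfolding cspan_def by (rule CollectI, rule exI[of _ "{}"]) simp

lemma cspan_superset: "x \<in> S \<Longrightarrow> x \<in> cspan S"
  unfolding cspan_def
  by (rule CollectI, rule exI[of _ "{x}"], rule exI[of _ "\<lambda>_. 1"]) (simp add: scaleC_one)

lemma cspan_scaleC:
  fixes S :: "'a::complex_hilbert set"
  assumes "x \<in> cspan S"
  shows "scaleC a x \<in> cspan S"
proof -
  obtain T c where "finite T" "T \<subseteq> S" "x = (\<Sum>v\<in>T. scaleC (c v) v)"
    using assms unfolding cspan_def by blast
  then show ?thesis
    unfolding cspan_def
    by (intro CollectI exI[of _ T] exI[of _ "\<lambda>v. a * c v"])
      (simp add: scaleC_sum_right scaleC_scaleC)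
qed

lemma cspan_add:
  fixes S :: "'a::complex_hilbert set"
  assumes "x \<in> cspan S" "y \<in> cspan S"
  shows "x + y \<in> cspan S"
proof -
  obtain T1 c1 where T1: "finite T1" "T1 \<subseteq> S" "x = (\<Sum>v\<in>T1. scaleC (c1 v) v)"
    using assms(1) unfolding cspan_def by blast
  obtain T2 c2 where T2: "finite T2" "T2 \<subseteq> S" "y = (\<Sum>v\<in>T2. scaleC (c2 v) v)"
    using assms(2) unfolding cspan_def by blast
  define c where "c v = (if v \<in> T1 then c1 v else 0) + (if v \<in> T2 then c2 v else 0)" for v
  have "(\<Sum>v\<in>T1 \<union> T2. scaleC (if v \<in> T1 then c1 v else 0) v) = x"
    unfolding T1(3) using T1 T2 by (intro sum.mono_neutral_cong_right) auto
  moreover have "(\<Sum>v\<in>T1 \<union> T2. scaleC (if v \<in> T2 then c2 v else 0) v) = y"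
    unfolding T2(3) using T1 T2 by (intro sum.mono_neutral_cong_right) auto
  ultimately have "x + y = (\<Sum>v\<in>T1 \<union> T2. scaleC (c v) v)"
    by (simp add: c_def scaleC_add_left sum.distrib)
  then show ?thesis
    using T1 T2 unfolding cspan_def by blast
qed

lemma cspan_combination:
  "x \<in> cspan S \<Longrightarrow> y \<in> cspan S \<Longrightarrow> scaleC a x + scaleC b y \<in> cspan S"
  by (intro cspan_add cspan_scaleC)

lemma cspan_minimal:
  assumes "csubspace D" "S \<subseteq> D"
  shows "cspan S \<subseteq> D"
proof
  fix x assume "x \<in> cspan S"
  then show "x \<in> D"
    by (induction rule: cspan_induct) (use assms in \<open>auto simp: csubspace_def\<close>)
qed

lemma cspan_subset_cspan: "A \<subseteq> cspan B \<Longrightarrow> cspan A \<subseteq> cspan B"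
proof
  fix x assume "x \<in> cspan A" and sub: "A \<subseteq> cspan B"
  then show "x \<in> cspan B"
    by (induction rule: cspan_induct) (use sub in \<open>auto intro: cspan_add cspan_scaleC\<close>)
qed

lemma cspan_mono: "A \<subseteq> B \<Longrightarrow> cspan A \<subseteq> cspan B"
  by (rule cspan_subset_cspan) (auto intro: cspan_superset)

lemma cspan_eq_iff: "cspan A = cspan B \<longleftrightarrow> A \<subseteq> cspan B \<and> B \<subseteq> cspan A"
  by (metis cspan_subset_cspan cspan_superset subsetI subset_antisym)

lemma cspan_Un_cong:
  assumes "cspan A = cspan A'"
  shows "cspan (A \<union> B) = cspan (A' \<union> B)"
proof -
  have "A \<subseteq> cspan (A' \<union> B)" "A' \<subseteq> cspan (A \<union> B)"
    using assms cspan_superset cspan_mono[of A' "A' \<union> B"] cspan_mono[of A "A \<union> B"] by blast+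
  then show ?thesis
    unfolding cspan_eq_iff by (auto intro: cspan_superset)
qed

lemma cspan_UN_cong:
  assumes "\<And>b. cspan (A b) = cspan (B b)"
  shows "cspan (\<Union>b. A b) = cspan (\<Union>b. B b)"
proof -
  have "A b \<subseteq> cspan (\<Union>b. B b)" "B b \<subseteq> cspan (\<Union>b. A b)" for b
    using assms[of b] cspan_superset cspan_mono[of "A b" "\<Union>b. A b"] cspan_mono[of "B b" "\<Union>b. B b"]
    by blast+
  then show ?thesis
    unfolding cspan_eq_iff by blast
qed

lemma cspan_orthogonal:
  assumes "x \<in> cspan A" "y \<in> cspan B" "\<And>a b. a \<in> A \<Longrightarrow> b \<in> B \<Longrightarrow> cinner a b = 0"
  shows "cinner x y = 0"
proof -
  have "cinner a y = 0" if "a \<in> A" for a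
  proof -
    from assms(2) have "cinner y a = 0"
      by (induction rule: cspan_induct)
        (use assms(3) that cinner_eq_zero_commute in \<open>auto simp: cinner_add_left cinner_scaleC_left\<close>)
    then show ?thesis
      by (simp add: cinner_eq_zero_commute)
  qed
  with assms(1) show ?thesis
    by (induction rule: cspan_induct) (auto simp: cinner_add_left cinner_scaleC_left)
qed

section \<open>Orthonormal families and plane rotations\<close>

definition orthonormal_on :: "nat set \<Rightarrow> (nat \<Rightarrow> 'a::complex_hilbert) \<Rightarrow> bool" where
  "orthonormal_on I e \<longleftrightarrow> (\<forall>i\<in>I. \<forall>j\<in>I. cinner (e i) (e j) = (if i = j then 1 else 0))"

lemma orthonormal_onD:
  "orthonormal_on I e \<Longrightarrow> i \<in> I \<Longrightarrow> k \<in> I \<Longrightarrow> cinner (e i) (e k) = (if i = k then 1 else 0)"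
  unfolding orthonormal_on_def by blast

lemma orthonormal_on_insert_cspan:
  assumes e_on: "orthonormal_on I e" and span: "cspan (e ` I) = cspan (h ` I)" and "m \<notin> I"
    and u: "cinner u u = 1" "\<And>i. i \<in> I \<Longrightarrow> cinner u (h i) = 0"
  shows "orthonormal_on (insert m I) (e(m := u))"
    and "cspan (e(m := u) ` insert m I) = cspan (insert u (h ` I))"
proof -
  have "cinner u (e i) = 0" if "i \<in> I" for i
  proof (rule cspan_orthogonal[of u "{u}" "e i" "h ` I"])
    show "e i \<in> cspan (h ` I)"
      using span cspan_superset[OF imageI[OF that, of e]] by simp
  qed (auto simp: u cspan_superset)
  moreover from this have "cinner (e i) u = 0" if "i \<in> I" for i
    using that cinner_eq_zero_commute by blast
  ultimately show "orthonormal_on (insert m I) (e(m := u))"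
    using e_on \<open>m \<notin> I\<close> u(1) unfolding orthonormal_on_def by auto
  have "e(m := u) ` insert m I = e ` I \<union> {u}"
    using \<open>m \<notin> I\<close> by auto
  then show "cspan (e(m := u) ` insert m I) = cspan (insert u (h ` I))"
    using cspan_Un_cong[OF span, of "{u}"] by simp
qed

lemma cinner_cspan_disjoint_eq_zero:
  assumes "orthonormal_seq f" "A \<inter> B = {}" "x \<in> cspan (f ` A)" "y \<in> cspan (f ` B)"
  shows "cinner x y = 0"
  using assms(3,4) by (rule cspan_orthogonal) (use assms(1,2) in \<open>auto simp: orthonormal_seq_def\<close>)

lemma rotation_orthonormal:
  fixes x y :: "'a::complex_hilbert"
  assumes xx: "cinner x x = 1" and yy: "cinner y y = 1" and xy: "cinner x y = 0"
    and real: "cnj \<alpha> = \<alpha>" and norm: "\<alpha> * \<alpha> + \<beta> * cnj \<beta> = 1"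
  defines "u \<equiv> scaleC \<alpha> x + scaleC \<beta> y" and "v \<equiv> scaleC (- cnj \<beta>) x + scaleC \<alpha> y"
  shows "cinner u u = 1" "cinner v v = 1" "cinner u v = 0" "cspan {u, v} = cspan {x, y}"
proof -
  have yx: "cinner y x = 0"
    using xy cinner_eq_zero_commute by blast
  show "cinner u u = 1" "cinner v v = 1" "cinner u v = 0"
    unfolding u_def v_def cinner_combination using xx yy xy yx real norm
    by (simp_all add: algebra_simps)
  have "scaleC \<alpha> u + scaleC (- \<beta>) v = x" "scaleC (cnj \<beta>) u + scaleC \<alpha> v = y"
    unfolding u_def v_def scaleC_combination using real norm
    by (simp_all add: algebra_simps scaleC_one)
  then have "{x, y} \<subseteq> cspan {u, v}"
    by (metis cspan_combination cspan_superset insert_iff insert_subset subsetI)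
  moreover have "x \<in> cspan {x, y}" "y \<in> cspan {x, y}"
    by (simp_all add: cspan_superset)
  then have "{u, v} \<subseteq> cspan {x, y}"
    by (simp add: u_def v_def cspan_combination)
  ultimately show "cspan {u, v} = cspan {x, y}"
    by (simp add: cspan_eq_iff)
qed

lemma exists_unimodular_with_imaginary_product: "\<exists>\<omega>. \<omega> * cnj \<omega> = 1 \<and> \<omega> * m + cnj (\<omega> * m) = 0"
proof (cases "m = 0")
  case False
  define \<omega> where "\<omega> = \<i> * cnj m / complex_of_real (cmod m)"
  have m2: "m * cnj m = complex_of_real (cmod m * cmod m)"
    by (metis complex_norm_square power2_eq_square)
  have "\<omega> * cnj \<omega> = (m * cnj m) / complex_of_real (cmod m * cmod m)"
    by (simp add: \<omega>_def field_simps)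
  then have "\<omega> * cnj \<omega> = 1"
    using False by (simp add: m2)
  moreover have "\<omega> * m = \<i> * (m * cnj m) / complex_of_real (cmod m)"
    by (simp add: \<omega>_def algebra_simps)
  then have "\<omega> * m = \<i> * complex_of_real (cmod m)"
    using False by (simp add: m2)
  then have "\<omega> * m + cnj (\<omega> * m) = 0"
    by simp
  ultimately show ?thesis
    by blast
qed (auto intro: exI[of _ 1])

locale symmetric_operator =
  fixes D :: "'a::complex_hilbert set" and E :: "'a \<Rightarrow> 'a"
  assumes operator: "operator_on D E" and symmetric: "symmetric_on D E"
begin

lemma cspan_subset_domain: "S \<subseteq> D \<Longrightarrow> cspan S \<subseteq> D"
  using cspan_minimal operator unfolding operator_on_def by blast

lemma quadratic_form_combination:
  assumes "x \<in> D" "y \<in> D"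
  shows "cinner (E (scaleC \<gamma> x + scaleC \<delta> y)) (scaleC \<gamma> x + scaleC \<delta> y) =
    \<gamma> * cnj \<gamma> * cinner (E x) x + (cnj \<gamma> * \<delta> * cinner (E y) x + cnj (cnj \<gamma> * \<delta> * cinner (E y) x))
      + \<delta> * cnj \<delta> * cinner (E y) y"
proof -
  have "E (scaleC \<gamma> x + scaleC \<delta> y) = scaleC \<gamma> (E x) + scaleC \<delta> (E y)"
    using assms operator unfolding operator_on_def csubspace_def by simp
  moreover have "cinner (E x) y = cnj (cinner (E y) x)"
    using assms symmetric unfolding symmetric_on_def by (metis cinner_conj_commute)
  ultimately show ?thesis
    by (simp add: cinner_combination algebra_simps)
qed

lemma rotation_diagonal:
  assumes D: "x \<in> D" "y \<in> D" and real: "cnj \<alpha> = \<alpha>"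
    and cross: "\<beta> * cinner (E y) x + cnj (\<beta> * cinner (E y) x) = 0"
  shows "cinner (E (scaleC \<alpha> x + scaleC \<beta> y)) (scaleC \<alpha> x + scaleC \<beta> y)
      = \<alpha> * \<alpha> * cinner (E x) x + \<beta> * cnj \<beta> * cinner (E y) y"
    and "cinner (E (scaleC (- cnj \<beta>) x + scaleC \<alpha> y)) (scaleC (- cnj \<beta>) x + scaleC \<alpha> y)
      = \<beta> * cnj \<beta> * cinner (E x) x + \<alpha> * \<alpha> * cinner (E y) y"
proof -
  let ?cross = "\<beta> * cinner (E y) x + cnj (\<beta> * cinner (E y) x)"
  have "cinner (E (scaleC \<alpha> x + scaleC \<beta> y)) (scaleC \<alpha> x + scaleC \<beta> y)
      = \<alpha> * \<alpha> * cinner (E x) x + \<alpha> * ?cross + \<beta> * cnj \<beta> * cinner (E y) y"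
    unfolding quadratic_form_combination[OF D] using real by (simp add: algebra_simps)
  then show "cinner (E (scaleC \<alpha> x + scaleC \<beta> y)) (scaleC \<alpha> x + scaleC \<beta> y)
      = \<alpha> * \<alpha> * cinner (E x) x + \<beta> * cnj \<beta> * cinner (E y) y"
    using cross by simp
  have "cinner (E (scaleC (- cnj \<beta>) x + scaleC \<alpha> y)) (scaleC (- cnj \<beta>) x + scaleC \<alpha> y)
      = \<beta> * cnj \<beta> * cinner (E x) x - \<alpha> * ?cross + \<alpha> * \<alpha> * cinner (E y) y"
    unfolding quadratic_form_combination[OF D] using real by (simp add: algebra_simps)
  then show "cinner (E (scaleC (- cnj \<beta>) x + scaleC \<alpha> y)) (scaleC (- cnj \<beta>) x + scaleC \<alpha> y)
      = \<beta> * cnj \<beta> * cinner (E x) x + \<alpha> * \<alpha> * cinner (E y) y"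
    using cross by simp
qed

lemma exists_rotation_with_diagonal:
  assumes D: "x \<in> D" "y \<in> D"
    and on: "cinner x x = 1" "cinner y y = 1" "cinner x y = 0"
    and diag: "cinner (E x) x = complex_of_real a" "cinner (E y) y = complex_of_real b"
    and t: "a \<le> t" "t \<le> b"
  shows "\<exists>u v. cinner u u = 1 \<and> cinner v v = 1 \<and> cinner u v = 0 \<and> cspan {u, v} = cspan {x, y}
    \<and> cinner (E u) u = complex_of_real t \<and> cinner (E v) v = complex_of_real (a + b - t)"
proof -
  define p where "p = (if a = b then 1 else (b - t) / (b - a))"
  have p: "0 \<le> p" "p \<le> 1" "p * a + (1 - p) * b = t"
    using t by (auto simp: p_def field_simps)
  obtain \<omega> where \<omega>: "\<omega> * cnj \<omega> = 1" "\<omega> * cinner (E y) x + cnj (\<omega> * cinner (E y) x) = 0"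
    using exists_unimodular_with_imaginary_product by blast
  define \<alpha> where "\<alpha> = complex_of_real (sqrt p)"
  define \<beta> where "\<beta> = complex_of_real (sqrt (1 - p)) * \<omega>"
  have \<alpha>: "cnj \<alpha> = \<alpha>" "\<alpha> * \<alpha> = complex_of_real p"
    using p by (simp_all add: \<alpha>_def flip: of_real_mult)
  have \<beta>: "\<beta> * cnj \<beta> = complex_of_real (1 - p)"
    using p \<omega>(1) by (simp add: \<beta>_def algebra_simps flip: of_real_mult)
  have "\<beta> * cinner (E y) x + cnj (\<beta> * cinner (E y) x)
      = complex_of_real (sqrt (1 - p)) * (\<omega> * cinner (E y) x + cnj (\<omega> * cinner (E y) x))"
    by (simp add: \<beta>_def algebra_simps)
  then have cross: "\<beta> * cinner (E y) x + cnj (\<beta> * cinner (E y) x) = 0"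
    using \<omega>(2) by simp
  have norm: "\<alpha> * \<alpha> + \<beta> * cnj \<beta> = 1"
    using \<alpha>(2) \<beta> by simp
  have "cinner (E (scaleC \<alpha> x + scaleC \<beta> y)) (scaleC \<alpha> x + scaleC \<beta> y)
      = complex_of_real (p * a + (1 - p) * b)"
    using rotation_diagonal(1)[OF D \<alpha>(1) cross] diag \<alpha>(2) \<beta> by simp
  moreover have "cinner (E (scaleC (- cnj \<beta>) x + scaleC \<alpha> y)) (scaleC (- cnj \<beta>) x + scaleC \<alpha> y)
      = complex_of_real ((1 - p) * a + p * b)"
    using rotation_diagonal(2)[OF D \<alpha>(1) cross] diag \<alpha>(2) \<beta> by simp
  moreover have "(1 - p) * a + p * b = a + b - t"
    using p(3) by (simp add: algebra_simps)
  ultimately show ?thesis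
    using rotation_orthonormal[OF on \<alpha>(1) norm] p(3) by auto
qed

end

section \<open>Majorization\<close>

text \<open>On the indices \<open>{Suc m..<n}\<close>, \<open>merge_pair j w h\<close> lists \<open>h m, \<dots>, h (j - 1), w,
  h (j + 2), \<dots>, h (n - 1)\<close>: the adjacent entries \<open>h j\<close> and \<open>h (Suc j)\<close> are merged into \<open>w\<close>
  in place.\<close>
definition merge_pair :: "nat \<Rightarrow> 'b \<Rightarrow> (nat \<Rightarrow> 'b) \<Rightarrow> nat \<Rightarrow> 'b" where
  "merge_pair j w h i = (if i \<le> j then h (i - 1) else if i = Suc j then w else h i)"

lemma image_merge_pair:
  assumes "m \<le> j" "Suc j < n"
  shows "merge_pair j w h ` {Suc m..<n} = insert w (h ` ({m..<n} - {j, Suc j}))"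
proof (intro equalityI subsetI)
  fix x assume "x \<in> merge_pair j w h ` {Suc m..<n}"
  then obtain i where "i \<in> {Suc m..<n}" "x = merge_pair j w h i"
    by blast
  then show "x \<in> insert w (h ` ({m..<n} - {j, Suc j}))"
    unfolding merge_pair_def by (auto split: if_splits intro!: imageI)
next
  fix x assume x: "x \<in> insert w (h ` ({m..<n} - {j, Suc j}))"
  have "w = merge_pair j w h (Suc j)" "Suc j \<in> {Suc m..<n}"
    using assms by (simp_all add: merge_pair_def)
  moreover have "h i \<in> merge_pair j w h ` {Suc m..<n}" if "i \<in> {m..<n} - {j, Suc j}" for i
  proof (cases "i < j")
    case True
    then have "h i = merge_pair j w h (Suc i)" "Suc i \<in> {Suc m..<n}"
      using that assms by (simp_all add: merge_pair_def)
    then show ?thesis by blast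
  next
    case False
    then have "h i = merge_pair j w h i" "i \<in> {Suc m..<n}"
      using that assms by (auto simp: merge_pair_def)
    then show ?thesis by blast
  qed
  ultimately show "x \<in> merge_pair j w h ` {Suc m..<n}"
    using x by blast
qed

lemma orthonormal_on_merge_pair:
  assumes "orthonormal_on {m..<n} g" "m \<le> j" "Suc j < n" "cinner v v = 1"
    and "\<And>i. i \<in> {m..<n} - {j, Suc j} \<Longrightarrow> cinner v (g i) = 0"
  shows "orthonormal_on {Suc m..<n} (merge_pair j v g)"
  unfolding orthonormal_on_def
proof (intro ballI)
  fix i k assume i: "i \<in> {Suc m..<n}" and k: "k \<in> {Suc m..<n}"
  have "cinner v (merge_pair j v g l) = 0" if "l \<in> {Suc m..<n}" "l \<noteq> Suc j" for l
  proof (cases "l \<le> j")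
    case True
    then have "l - 1 \<in> {m..<n} - {j, Suc j}"
      using that by auto
    with True show ?thesis
      using assms(5) by (simp add: merge_pair_def)
  next
    case False
    then have "l \<in> {m..<n} - {j, Suc j}"
      using that by auto
    with False that show ?thesis
      using assms(5) by (simp add: merge_pair_def)
  qed
  then have v_orth: "cinner v (merge_pair j v g l) = 0" "cinner (merge_pair j v g l) v = 0"
    if "l \<in> {Suc m..<n}" "l \<noteq> Suc j" for l
    using that cinner_eq_zero_commute by blast+
  show "cinner (merge_pair j v g i) (merge_pair j v g k) = (if i = k then 1 else 0)"
  proof (cases "i = Suc j \<or> k = Suc j")
    case True
    have "merge_pair j v g (Suc j) = v"
      by (simp add: merge_pair_def)
    with True show ?thesis
      using v_orth[OF i] v_orth[OF k] assms(4) by auto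
  next
    case False
    define \<sigma> where "\<sigma> l = (if l \<le> j then l - 1 else l)" for l
    have "merge_pair j v g i = g (\<sigma> i)" "merge_pair j v g k = g (\<sigma> k)"
      using False by (auto simp: merge_pair_def \<sigma>_def)
    moreover have "\<sigma> i \<in> {m..<n}" "\<sigma> k \<in> {m..<n}" "\<sigma> i = \<sigma> k \<longleftrightarrow> i = k"
      using i k False by (auto simp: \<sigma>_def)
    ultimately show ?thesis
      using assms(1) unfolding orthonormal_on_def by auto
  qed
qed

lemma cspan_insert_merge_pair:
  assumes "m \<le> j" "Suc j < n" "cspan {u, v} = cspan {g j, g (Suc j)}"
  shows "cspan (insert u (merge_pair j v g ` {Suc m..<n})) = cspan (g ` {m..<n})"
proof -
  have "g ` {m..<n} = {g j, g (Suc j)} \<union> g ` ({m..<n} - {j, Suc j})"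
    using assms(1,2) by auto
  moreover have "insert u (merge_pair j v g ` {Suc m..<n}) = {u, v} \<union> g ` ({m..<n} - {j, Suc j})"
    unfolding image_merge_pair[OF assms(1,2)] by auto
  ultimately show ?thesis
    using cspan_Un_cong[OF assms(3)] by simp
qed

definition majorized_on :: "nat \<Rightarrow> nat \<Rightarrow> (nat \<Rightarrow> real) \<Rightarrow> (nat \<Rightarrow> real) \<Rightarrow> bool" where
  "majorized_on m n d lam \<longleftrightarrow> mono_on {m..<n} d \<and> mono_on {m..<n} lam
     \<and> (\<forall>k\<le>n. (\<Sum>i=m..<k. lam i) \<le> (\<Sum>i=m..<k. d i))
     \<and> (\<Sum>i=m..<n. lam i) = (\<Sum>i=m..<n. d i)"

lemma exists_bracketing_index:
  fixes lam :: "nat \<Rightarrow> 'b::linorder"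
  assumes "lam m \<le> t" "t \<le> lam p" "m < p"
  shows "\<exists>j. m \<le> j \<and> j < p \<and> lam j \<le> t \<and> t \<le> lam (Suc j)"
  using assms
proof (induction p)
  case (Suc q)
  show ?case
  proof (cases "lam q \<le> t")
    case True
    with Suc.prems show ?thesis
      by (intro exI[of _ q]) (auto simp: less_Suc_eq_le)
  next
    case False
    with Suc.prems have "m < q"
      by (metis le_neq_implies_less less_Suc_eq_le)
    with False Suc.IH Suc.prems(1) show ?thesis
      by (meson less_SucI nle_le)
  qed
qed simp

lemma majorized_on_pivot:
  assumes maj: "majorized_on m n d lam" and "Suc m < n"
  shows "\<exists>j. m \<le> j \<and> Suc j < n \<and> lam j \<le> d m \<and> d m \<le> lam (Suc j)"
proof -
  obtain q where q: "n = Suc q" "m < q"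
    using assms(2) by (cases n) auto
  have partial: "\<And>k. k \<le> n \<Longrightarrow> (\<Sum>i=m..<k. lam i) \<le> (\<Sum>i=m..<k. d i)"
    and total: "(\<Sum>i=m..<n. lam i) = (\<Sum>i=m..<n. d i)"
    using maj unfolding majorized_on_def by auto
  have "lam m \<le> d m"
    using partial[of "Suc m"] assms(2) by simp
  moreover have "d q \<le> lam q"
    using partial[of q] total q by simp
  moreover have "d m \<le> d q"
    using maj q unfolding majorized_on_def by (auto intro: mono_onD)
  ultimately show ?thesis
    using exists_bracketing_index[of lam m "d m" q] q by auto
qed

lemma mono_on_merge_pair:
  fixes h :: "nat \<Rightarrow> 'b::linorder"
  assumes mono: "mono_on {m..<n} h" and j: "m \<le> j" "Suc j < n" and w: "h j \<le> w" "w \<le> h (Suc j)"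
  shows "mono_on {Suc m..<n} (merge_pair j w h)"
proof (rule mono_onI)
  have between: "h (i - 1) \<le> merge_pair j w h i" "merge_pair j w h i \<le> h i"
    if "i \<in> {Suc m..<n}" for i
  proof -
    have "h (i - 1) \<le> h i"
      using that by (intro mono_onD[OF mono]) auto
    then show "h (i - 1) \<le> merge_pair j w h i" "merge_pair j w h i \<le> h i"
      using j w by (auto simp: merge_pair_def)
  qed
  fix i k assume i: "i \<in> {Suc m..<n}" and k: "k \<in> {Suc m..<n}" and "i \<le> k"
  show "merge_pair j w h i \<le> merge_pair j w h k"
  proof (cases "i = k")
    case False
    then have "h i \<le> h (k - 1)"
      using i k \<open>i \<le> k\<close> by (intro mono_onD[OF mono]) auto
    then show ?thesis
      using between[OF i] between[OF k] by (meson order.trans)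
  qed simp
qed

lemma sum_merge_pair:
  fixes h :: "nat \<Rightarrow> 'b::ab_group_add"
  assumes "m \<le> j" "Suc j < k"
  shows "(\<Sum>i=Suc m..<k. merge_pair j w h i) = (\<Sum>i=m..<k. h i) - h j - h (Suc j) + w"
  using assms(2)
proof (induction k)
  case (Suc k)
  show ?case
  proof (cases "k = Suc j")
    case True
    have "(\<Sum>i=Suc m..<Suc j. merge_pair j w h i) = (\<Sum>i=m..<j. h i)"
      unfolding sum.shift_bounds_Suc_ivl by (intro sum.cong) (auto simp: merge_pair_def)
    then show ?thesis
      using True assms(1) by (simp add: merge_pair_def)
  next
    case False
    with Suc show ?thesis
      using assms(1) by (simp add: merge_pair_def)
  qed
qed simp

lemma majorized_on_merge_pair:
  assumes maj: "majorized_on m n d lam" and j: "m \<le> j" "Suc j < n"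
    and bracket: "lam j \<le> d m" "d m \<le> lam (Suc j)"
  shows "majorized_on (Suc m) n d (merge_pair j (lam j + lam (Suc j) - d m) lam)"
    (is "majorized_on _ _ _ ?lam'")
proof -
  have mono_d: "mono_on {m..<n} d" and mono_lam: "mono_on {m..<n} lam"
    and partial: "\<And>k. k \<le> n \<Longrightarrow> (\<Sum>i=m..<k. lam i) \<le> (\<Sum>i=m..<k. d i)"
    and total: "(\<Sum>i=m..<n. lam i) = (\<Sum>i=m..<n. d i)"
    using maj unfolding majorized_on_def by auto
  have low: "?lam' i \<le> d i" if "i \<in> {Suc m..<n}" "i \<le> j" for i
  proof -
    have "lam (i - 1) \<le> lam j"
      using that j by (intro mono_onD[OF mono_lam]) auto
    moreover have "d m \<le> d i"
      using that by (intro mono_onD[OF mono_d]) auto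
    ultimately show ?thesis
      using that bracket by (simp add: merge_pair_def)
  qed
  have high: "(\<Sum>i=Suc m..<k. ?lam' i) = (\<Sum>i=m..<k. lam i) - d m" if "Suc j < k" for k
    using sum_merge_pair[OF j(1) that, where h = lam] by simp
  have d_split: "(\<Sum>i=m..<k. d i) = d m + (\<Sum>i=Suc m..<k. d i)" if "m < k" for k
    using that by (rule sum.atLeast_Suc_lessThan)
  have "(\<Sum>i=Suc m..<k. ?lam' i) \<le> (\<Sum>i=Suc m..<k. d i)" if "k \<le> n" for k
  proof (cases "k \<le> Suc j")
    case True
    then show ?thesis
      using low that by (intro sum_mono) auto
  next
    case False
    then show ?thesis
      using high[of k] partial[OF that] d_split[of k] j by simp
  qed
  moreover have "(\<Sum>i=Suc m..<n. ?lam' i) = (\<Sum>i=Suc m..<n. d i)"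
    using high[of n] total d_split[of n] j by simp
  ultimately show ?thesis
    using mono_d mono_on_merge_pair[OF mono_lam j] bracket
    unfolding majorized_on_def by (auto intro: mono_on_subset)
qed

lemma majorized_on_between_zeros:
  fixes d lam :: "nat \<Rightarrow> real"
  assumes "mono d" "mono lam" "\<And>k. (\<Sum>i<k. d i - lam i) \<ge> 0"
    and "(\<Sum>i<m. d i - lam i) = 0" "(\<Sum>i<n. d i - lam i) = 0" "m \<le> n"
  shows "majorized_on m n d lam"
proof -
  have partial: "(\<Sum>i=m..<k. d i - lam i) = (\<Sum>i<k. d i - lam i)" if "m \<le> k" for k
    using that assms(4) sum.atLeastLessThan_concat[of 0 m k "\<lambda>i. d i - lam i"]
    by (simp add: atLeast0LessThan)
  have "(\<Sum>i=m..<k. lam i) \<le> (\<Sum>i=m..<k. d i)" for k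
    using partial[of k] assms(3)[of k] by (cases "m \<le> k") (auto simp: sum_subtractf)
  moreover have "(\<Sum>i=m..<n. lam i) = (\<Sum>i=m..<n. d i)"
    using partial[OF assms(6)] assms(5) by (simp add: sum_subtractf)
  ultimately show ?thesis
    using assms(1,2) unfolding majorized_on_def by (auto intro: mono_on_subset)
qed

section \<open>The finite case\<close>

context symmetric_operator
begin

lemma exists_rotation_step:
  assumes gD: "\<And>i. i \<in> {m..<n} \<Longrightarrow> g i \<in> D" and g_on: "orthonormal_on {m..<n} g"
    and g_diag: "\<And>i. i \<in> {m..<n} \<Longrightarrow> cinner (E (g i)) (g i) = complex_of_real (lam i)"
    and j: "m \<le> j" "Suc j < n" and bracket: "lam j \<le> t" "t \<le> lam (Suc j)"
  obtains u g' where "cinner u u = 1" "cinner (E u) u = complex_of_real t"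
    "\<And>i. i \<in> {Suc m..<n} \<Longrightarrow> g' i \<in> D" "orthonormal_on {Suc m..<n} g'"
    "\<And>i. i \<in> {Suc m..<n} \<Longrightarrow> cinner u (g' i) = 0"
    "\<And>i. i \<in> {Suc m..<n} \<Longrightarrow>
      cinner (E (g' i)) (g' i) = complex_of_real (merge_pair j (lam j + lam (Suc j) - t) lam i)"
    "cspan (insert u (g' ` {Suc m..<n})) = cspan (g ` {m..<n})"
proof -
  have j_in: "j \<in> {m..<n}" "Suc j \<in> {m..<n}"
    using j by auto
  have "cinner (g j) (g j) = 1" "cinner (g (Suc j)) (g (Suc j)) = 1" "cinner (g j) (g (Suc j)) = 0"
    using orthonormal_onD[OF g_on] j_in by simp_all
  from exists_rotation_with_diagonal[OF gD[OF j_in(1)] gD[OF j_in(2)] this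
      g_diag[OF j_in(1)] g_diag[OF j_in(2)] bracket]
  obtain u v where uv: "cinner u u = 1" "cinner v v = 1" "cinner u v = 0"
      and span_uv: "cspan {u, v} = cspan {g j, g (Suc j)}"
      and diag_u: "cinner (E u) u = complex_of_real t"
      and diag_v: "cinner (E v) v = complex_of_real (lam j + lam (Suc j) - t)"
    by blast
  have orth_pair: "cinner x (g i) = 0" if "x \<in> cspan {u, v}" "i \<in> {m..<n} - {j, Suc j}" for x i
    using that orthonormal_onD[OF g_on] j_in unfolding span_uv
    by (intro cspan_orthogonal[of x _ "g i" "{g i}"]) (auto intro: cspan_superset)
  have idx: "i - 1 \<in> {m..<n}" "i \<in> {m..<n}" if "i \<in> {Suc m..<n}" for i
    using that by auto
  have "v \<in> D"
    using cspan_subset_domain[of "{g j, g (Suc j)}"] gD j_in span_uv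
    by (auto intro: cspan_superset)
  then have "merge_pair j v g i \<in> D" if "i \<in> {Suc m..<n}" for i
    using gD[OF idx(1)[OF that]] gD[OF idx(2)[OF that]] by (simp add: merge_pair_def)
  moreover have "orthonormal_on {Suc m..<n} (merge_pair j v g)"
    using g_on j uv(2) orth_pair by (intro orthonormal_on_merge_pair) (auto intro: cspan_superset)
  moreover have "cinner u b = 0" if "b \<in> merge_pair j v g ` {Suc m..<n}" for b
  proof -
    from that consider "b = v" | l where "l \<in> {m..<n} - {j, Suc j}" "b = g l"
      unfolding image_merge_pair[OF j] by blast
    then show ?thesis
      by cases (simp_all add: uv(3) orth_pair cspan_superset)
  qed
  moreover have "cinner (E (merge_pair j v g i)) (merge_pair j v g i)
      = complex_of_real (merge_pair j (lam j + lam (Suc j) - t) lam i)" if "i \<in> {Suc m..<n}" for i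
    using g_diag[OF idx(1)[OF that]] g_diag[OF idx(2)[OF that]] diag_v
    by (simp add: merge_pair_def)
  ultimately show ?thesis
    using that[of u "merge_pair j v g"] uv(1) diag_u cspan_insert_merge_pair[OF j span_uv] by blast
qed

lemma exists_orthonormal_with_diagonal:
  assumes "majorized_on m n d lam" "\<And>i. i \<in> {m..<n} \<Longrightarrow> g i \<in> D"
    and "orthonormal_on {m..<n} g"
    and "\<And>i. i \<in> {m..<n} \<Longrightarrow> cinner (E (g i)) (g i) = complex_of_real (lam i)"
  shows "\<exists>e. orthonormal_on {m..<n} e \<and> cspan (e ` {m..<n}) = cspan (g ` {m..<n})
    \<and> (\<forall>i\<in>{m..<n}. cinner (E (e i)) (e i) = complex_of_real (d i))"
  using assms
proof (induction "n - m" arbitrary: m g lam)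
  case 0
  then show ?case
    by (intro exI[of _ g]) auto
next
  case (Suc k)
  note maj = Suc.prems(1)
  consider "n = Suc m" | "Suc m < n"
    using Suc.hyps(2) by linarith
  then show ?case
  proof cases
    case 1
    then have "d m = lam m"
      using maj by (simp add: majorized_on_def)
    with 1 show ?thesis
      using Suc.prems by (intro exI[of _ g]) auto
  next
    case 2
    obtain j where j: "m \<le> j" "Suc j < n" and bracket: "lam j \<le> d m" "d m \<le> lam (Suc j)"
      using majorized_on_pivot[OF maj 2] by blast
    obtain u g' where u: "cinner u u = 1" "cinner (E u) u = complex_of_real (d m)"
      and g'D: "\<And>i. i \<in> {Suc m..<n} \<Longrightarrow> g' i \<in> D" and g'_on: "orthonormal_on {Suc m..<n} g'"
      and u_g': "\<And>i. i \<in> {Suc m..<n} \<Longrightarrow> cinner u (g' i) = 0"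
      and g'_diag: "\<And>i. i \<in> {Suc m..<n} \<Longrightarrow>
        cinner (E (g' i)) (g' i) = complex_of_real (merge_pair j (lam j + lam (Suc j) - d m) lam i)"
      and span_g': "cspan (insert u (g' ` {Suc m..<n})) = cspan (g ` {m..<n})"
      using exists_rotation_step[OF Suc.prems(2-4) j bracket] by blast
    have "k = n - Suc m"
      using Suc.hyps(2) by simp
    from Suc.hyps(1)[OF this majorized_on_merge_pair[OF maj j bracket] g'D g'_on g'_diag]
    obtain e' where e'_on: "orthonormal_on {Suc m..<n} e'"
        and span_e': "cspan (e' ` {Suc m..<n}) = cspan (g' ` {Suc m..<n})"
        and diag_e': "\<forall>i\<in>{Suc m..<n}. cinner (E (e' i)) (e' i) = complex_of_real (d i)"
      by blast
    define e where "e = e'(m := u)"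
    have interval: "{m..<n} = insert m {Suc m..<n}"
      using 2 by auto
    have "orthonormal_on {m..<n} e" "cspan (e ` {m..<n}) = cspan (g ` {m..<n})"
      using orthonormal_on_insert_cspan[OF e'_on span_e' _ u(1) u_g'] span_g'
      unfolding e_def interval by simp_all
    moreover have "\<forall>i\<in>{m..<n}. cinner (E (e i)) (e i) = complex_of_real (d i)"
      unfolding interval e_def using u(2) diag_e' by auto
    ultimately show ?thesis
      by blast
  qed
qed

end

section \<open>Gluing finite blocks\<close>

definition block_index :: "(nat \<Rightarrow> nat) \<Rightarrow> nat \<Rightarrow> nat" where
  "block_index z i = (THE b. i \<in> {z b..<z (Suc b)})"

lemma ex1_block_containing:
  fixes z :: "nat \<Rightarrow> nat"
  assumes "strict_mono z" "z 0 = 0"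
  shows "\<exists>!b. i \<in> {z b..<z (Suc b)}"
proof (rule ex_ex1I)
  show "\<exists>b. i \<in> {z b..<z (Suc b)}"
  proof (induction i)
    case 0
    then show ?case
      using assms strict_monoD[OF assms(1), of 0 1] by (intro exI[of _ 0]) auto
  next
    case (Suc i)
    then obtain b where b: "z b \<le> i" "i < z (Suc b)"
      by auto
    show ?case
    proof (cases "Suc i = z (Suc b)")
      case True
      then show ?thesis
        using assms(1) by (intro exI[of _ "Suc b"]) (auto simp: strict_mono_less)
    next
      case False
      with b show ?thesis
        by (intro exI[of _ b]) auto
    qed
  qed
next
  have "\<not> b < c" if "i \<in> {z b..<z (Suc b)}" "i \<in> {z c..<z (Suc c)}" for b c
  proof
    assume "b < c"
    then have "z (Suc b) \<le> z c"
      using assms(1) by (simp add: strict_mono_less_eq)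
    with that show False
      by simp
  qed
  then show "b = c" if "i \<in> {z b..<z (Suc b)}" "i \<in> {z c..<z (Suc c)}" for b c
    using that by (meson linorder_neqE_nat)
qed

lemma block_index_eq:
  fixes z :: "nat \<Rightarrow> nat"
  assumes "strict_mono z" "z 0 = 0" "i \<in> {z b..<z (Suc b)}"
  shows "block_index z i = b"
  unfolding block_index_def using ex1_block_containing[OF assms(1,2)] assms(3) by (rule the1_equality)

lemma block_index_mem:
  fixes z :: "nat \<Rightarrow> nat"
  assumes "strict_mono z" "z 0 = 0"
  shows "i \<in> {z (block_index z i)..<z (Suc (block_index z i))}"
  using ex1_block_containing[OF assms, of i] block_index_eq[OF assms] by blast

lemma orthonormal_seq_glue_blocks:
  fixes f :: "nat \<Rightarrow> 'a::complex_hilbert"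
  assumes z: "strict_mono z" "z 0 = 0" and f: "orthonormal_seq f"
    and F_on: "\<And>b. orthonormal_on {z b..<z (Suc b)} (F b)"
    and F_span: "\<And>b. cspan (F b ` {z b..<z (Suc b)}) = cspan (f ` {z b..<z (Suc b)})"
  defines "e \<equiv> \<lambda>i. F (block_index z i) i"
  shows "orthonormal_seq e" "cspan (range e) = cspan (range f)"
proof -
  let ?I = "\<lambda>b. {z b..<z (Suc b)}"
  have e_block: "e i = F b i" if "i \<in> ?I b" for i b
    using block_index_eq[OF z that] by (simp add: e_def)
  have blocks: "(\<Union>b. ?I b) = UNIV"
    using block_index_mem[OF z] by blast
  have e_image: "e ` ?I b = F b ` ?I b" for b
    using e_block by auto
  have e_in: "e i \<in> cspan (f ` ?I b)" if "i \<in> ?I b" for i b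
    using F_span[of b] e_image[of b] that cspan_superset[of "e i" "F b ` ?I b"] by blast
  show "orthonormal_seq e"
    unfolding orthonormal_seq_def
  proof (intro allI)
    fix i k
    let ?b = "block_index z i" and ?c = "block_index z k"
    show "cinner (e i) (e k) = (if i = k then 1 else 0)"
    proof (cases "?b = ?c")
      case True
      have "i \<in> ?I ?b" "k \<in> ?I ?b"
        using block_index_mem[OF z, of i] block_index_mem[OF z, of k] True by auto
      with True show ?thesis
        using orthonormal_onD[OF F_on[of ?b]] by (simp add: e_def)
    next
      case False
      have "?I ?b \<inter> ?I ?c = {}"
        using False block_index_eq[OF z] by (metis disjoint_iff)
      then have "cinner (e i) (e k) = 0"
        using block_index_mem[OF z] by (intro cinner_cspan_disjoint_eq_zero[OF f _ e_in e_in])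
      moreover have "i \<noteq> k"
        using False by blast
      ultimately show ?thesis
        by simp
    qed
  qed
  have "range h = (\<Union>b. h ` ?I b)" for h :: "nat \<Rightarrow> 'a"
    by (metis blocks image_UN)
  then have "range e = (\<Union>b. F b ` ?I b)" "range f = (\<Union>b. f ` ?I b)"
    by (simp_all add: e_image)
  then show "cspan (range e) = cspan (range f)"
    using cspan_UN_cong[OF F_span] by simp
qed

lemma (in symmetric_operator) exists_orthonormal_with_diagonal_blockwise:
  fixes f :: "nat \<Rightarrow> 'a"
  assumes z: "strict_mono z" "z 0 = 0" and maj: "\<And>b. majorized_on (z b) (z (Suc b)) d lam"
    and fD: "\<And>i. f i \<in> D" and f_on: "orthonormal_seq f"
    and f_diag: "\<And>i. cinner (E (f i)) (f i) = complex_of_real (lam i)"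
  shows "\<exists>e. orthonormal_seq e \<and> cspan (range e) = cspan (range f)
    \<and> (\<forall>i. cinner (E (e i)) (e i) = complex_of_real (d i))"
proof -
  have "\<forall>b. \<exists>F. orthonormal_on {z b..<z (Suc b)} F
      \<and> cspan (F ` {z b..<z (Suc b)}) = cspan (f ` {z b..<z (Suc b)})
      \<and> (\<forall>i\<in>{z b..<z (Suc b)}. cinner (E (F i)) (F i) = complex_of_real (d i))"
  proof
    fix b
    have f_block: "orthonormal_on {z b..<z (Suc b)} f"
      using f_on by (simp add: orthonormal_on_def orthonormal_seq_def)
    show "\<exists>F. orthonormal_on {z b..<z (Suc b)} F
      \<and> cspan (F ` {z b..<z (Suc b)}) = cspan (f ` {z b..<z (Suc b)})
      \<and> (\<forall>i\<in>{z b..<z (Suc b)}. cinner (E (F i)) (F i) = complex_of_real (d i))"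
      by (intro exists_orthonormal_with_diagonal[OF maj[of b] _ f_block]) (simp_all add: fD f_diag)
  qed
  from choice[OF this] obtain F where F: "\<forall>b. orthonormal_on {z b..<z (Suc b)} (F b)
      \<and> cspan (F b ` {z b..<z (Suc b)}) = cspan (f ` {z b..<z (Suc b)})
      \<and> (\<forall>i\<in>{z b..<z (Suc b)}. cinner (E (F b i)) (F b i) = complex_of_real (d i))"
    by blast
  define e where "e i = F (block_index z i) i" for i
  have "orthonormal_seq e" "cspan (range e) = cspan (range f)"
    unfolding e_def using orthonormal_seq_glue_blocks[OF z f_on] F by auto
  moreover have "cinner (E (e i)) (e i) = complex_of_real (d i)" for i
    unfolding e_def using F block_index_mem[OF z] by blast
  ultimately show ?thesis
    by blast
qed

theorem lemma2p5:
  fixes E :: "'a::complex_hilbert \<Rightarrow> 'a" and D :: "'a set"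
    and d lam :: "nat \<Rightarrow> real" and f :: "nat \<Rightarrow> 'a"
  assumes op: "operator_on D E"
    and dense: "closure D = UNIV"
    and sym: "symmetric_on D E"
    and mono_d: "mono d" and mono_lam: "mono lam"
    and delta_nonneg: "\<And>k. (\<Sum>i<k. d i - lam i) \<ge> 0"
    and delta_zero: "infinite {k. (\<Sum>i<k. d i - lam i) = 0}"
    and fD: "\<And>i. f i \<in> D"
    and f_on: "orthonormal_seq f"
    and f_diag: "\<And>i. cinner (E (f i)) (f i) = complex_of_real (lam i)"
  shows "\<exists>e::nat \<Rightarrow> 'a. orthonormal_seq e \<and> (\<forall>i. e i \<in> cspan (range f))
           \<and> closure (cspan (range e)) = closure (cspan (range f))
           \<and> (\<forall>i. cinner (E (e i)) (e i) = complex_of_real (d i))"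
proof -
  interpret symmetric_operator D E
    using op sym by unfold_locales
  define z where "z = enumerate {k. (\<Sum>i<k. d i - lam i) = 0}"
  have z: "strict_mono z" "z 0 = 0"
    using delta_zero by (auto simp: z_def strict_mono_enumerate enumerate_0 intro!: Least_equality)
  have "majorized_on (z b) (z (Suc b)) d lam" for b
    using enumerate_in_set[OF delta_zero] z(1)
    by (intro majorized_on_between_zeros[OF mono_d mono_lam delta_nonneg])
      (auto simp: z_def strict_mono_less_eq)
  then obtain e where "orthonormal_seq e" and span: "cspan (range e) = cspan (range f)"
    and "\<forall>i. cinner (E (e i)) (e i) = complex_of_real (d i)"
    using exists_orthonormal_with_diagonal_blockwise[OF z _ fD f_on f_diag] by blast
  moreover have "e i \<in> cspan (range f)" for i
    using span cspan_superset[of "e i" "range e"] by simp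
  ultimately show ?thesis
    using span by auto
qed

end
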